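(* Let $X$ be a normal topological space and let $f,g,h\colon X\to Y$ be continuous maps. Then $\mathrm{D}(f,h)\leq \mathrm{D}(f,g)+\mathrm{D}(g,h)$.
   Context: For continuous maps $f,g\colon X\to Y$, the homotopic distance $\mathrm{D}(f,g)$ is the least integer $n\geq 0$ such that there is an open cover $\{U_0,\dots,U_n\}$ of $X$ with $f|_{U_j}\simeq g|_{U_j}$ for all $j$; if no such cover exists, $\mathrm{D}(f,g)=\infty$. *)

theory Defs
  imports "HOL-Analysis.Analysis" "HOL-Library.Extended_Nat"
begin

definition hd_cover :: "'a topology \<Rightarrow> 'b topology \<Rightarrow> ('a \<Rightarrow> 'b) \<Rightarrow> ('a \<Rightarrow> 'b) \<Rightarrow> nat \<Rightarrow> bool"
  where "hd_cover X Y f g n \<longleftrightarrow>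
    (\<exists>U :: nat \<Rightarrow> 'a set.
        (\<forall>j\<le>n. openin X (U j)) \<and>
        (\<Union>j\<le>n. U j) = topspace X \<and>
        (\<forall>j\<le>n. homotopic_with (\<lambda>_. True) (subtopology X (U j)) Y f g))"

definition homotopic_distance :: "'a topology \<Rightarrow> 'b topology \<Rightarrow> ('a \<Rightarrow> 'b) \<Rightarrow> ('a \<Rightarrow> 'b) \<Rightarrow> enat"
  where "homotopic_distance X Y f g =
    (if \<exists>n. hd_cover X Y f g n then enat (LEAST n. hd_cover X Y f g n) else \<infinity>)"

end

theory Submission
  imports Defs
begin

text \<open>
  Let \<open>A\<^sub>0, \<dots>, A\<^sub>m\<close> be a cover for \<open>(f, g)\<close> and \<open>B\<^sub>0, \<dots>, B\<^sub>n\<close> one for \<open>(g, h)\<close>.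
  Normality gives continuous \<open>\<phi>\<^sub>i, \<psi>\<^sub>j \<ge> 0\<close>, positive only inside \<open>A\<^sub>i\<close> resp. \<open>B\<^sub>j\<close>,
  such that at each point some \<open>\<phi>\<^sub>i\<close> and some \<open>\<psi>\<^sub>j\<close> are positive. For nonempty \<open>S, T\<close>
  let \<open>W(S, T)\<close> be the open set where each \<open>\<phi>\<^sub>i \<psi>\<^sub>j\<close> with \<open>(i, j) \<in> S \<times> T\<close> is positive
  and exceeds every product with index outside \<open>S \<times> T\<close>. At a fixed point the admissible
  \<open>S \<times> T\<close> form a chain under inclusion, so the \<open>W(S, T)\<close> with \<open>|S| + |T| = k + 2\<close> are
  pairwise disjoint; taking \<open>S, T\<close> to be the argmax sets of \<open>\<phi>\<close> and \<open>\<psi>\<close> shows that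
  \<open>k = 0, \<dots>, m + n\<close> suffices to cover \<open>X\<close>. On \<open>W(S, T) \<subseteq> A\<^sub>i \<inter> B\<^sub>j\<close> we have
  \<open>f \<simeq> g \<simeq> h\<close>, and homotopies on disjoint open sets glue.
\<close>

lemma homotopic_with_Union_disjoint_openin:
  assumes open_pieces: "\<And>P. P \<in> \<P> \<Longrightarrow> openin X P" and disj: "pairwise disjnt \<P>"
    and hom: "\<And>P. P \<in> \<P> \<Longrightarrow> homotopic_with (\<lambda>_. True) (subtopology X P) Y f g"
  shows "homotopic_with (\<lambda>_. True) (subtopology X (\<Union>\<P>)) Y f g"
proof -
  let ?Z = "prod_topology (top_of_set {0..1::real}) (subtopology X (\<Union>\<P>))"
  obtain H where H: "\<And>P. P \<in> \<P> \<Longrightarrow>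
      continuous_map (prod_topology (top_of_set {0..1::real}) (subtopology X P)) Y (H P)"
    "\<And>P x. P \<in> \<P> \<Longrightarrow> H P (0, x) = f x" "\<And>P x. P \<in> \<P> \<Longrightarrow> H P (1, x) = g x"
    using hom unfolding homotopic_with_def by metis
  obtain K where K: "continuous_map ?Z Y K"
    "\<And>z P. P \<in> \<P> \<Longrightarrow> z \<in> topspace ?Z \<inter> ({0..1} \<times> P) \<Longrightarrow> K z = H P z"
  proof (rule pasting_lemma_exists[where I=\<P> and T="\<lambda>P. {0..1} \<times> P" and f=H])
    fix P assume P: "P \<in> \<P>"
    then have "P \<subseteq> \<Union>\<P>" by blast
    then show "openin ?Z ({0..1} \<times> P)"
      using open_pieces[OF P] by (auto simp: openin_prod_Times_iff openin_subtopology intro!: exI[of _ P])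
    have "subtopology ?Z ({0..1} \<times> P) = prod_topology (top_of_set {0..1}) (subtopology X P)"
      using \<open>P \<subseteq> \<Union>\<P>\<close> by (simp add: subtopology_Times subtopology_subtopology Int_absorb1)
    with H(1)[OF P] show "continuous_map (subtopology ?Z ({0..1} \<times> P)) Y (H P)"
      by simp
  next
    fix P P' z assume "P \<in> \<P>" "P' \<in> \<P>" "z \<in> topspace ?Z \<inter> ({0..1} \<times> P) \<inter> ({0..1} \<times> P')"
    with disj show "H P z = H P' z"
      by (cases "P = P'") (auto simp: pairwise_def disjnt_iff)
  qed auto
  show ?thesis
    unfolding homotopic_with[where P="\<lambda>_. True", simplified]
  proof (intro exI conjI ballI)
    show "continuous_map ?Z Y K" by (fact K(1))
  next
    fix x assume "x \<in> topspace (subtopology X (\<Union>\<P>))"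
    then obtain P where "P \<in> \<P>" "x \<in> P" "x \<in> topspace X" by auto
    then show "K (0, x) = f x" "K (1, x) = g x"
      using K(2)[of P "(0, x)"] K(2)[of P "(1, x)"] H by auto
  qed
qed

lemma normal_space_closed_shrinking:
  assumes "normal_space X" "finite I" "closedin X S"
    and "\<And>i. i \<in> I \<Longrightarrow> openin X (A i)" "S \<subseteq> (\<Union>i\<in>I. A i)"
  obtains C where "\<And>i. i \<in> I \<Longrightarrow> closedin X (C i)" "\<And>i. i \<in> I \<Longrightarrow> C i \<subseteq> A i"
    "S \<subseteq> (\<Union>i\<in>I. C i)"
proof -
  have "\<exists>C. (\<forall>i\<in>I. closedin X (C i) \<and> C i \<subseteq> A i) \<and> S \<subseteq> (\<Union>i\<in>I. C i)"
    using assms(2-)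
  proof (induction I arbitrary: S rule: finite_induct)
    case empty
    then show ?case by auto
  next
    case (insert a I)
    let ?U = "(\<Union>i\<in>I. A i) \<union> (topspace X - S)" and ?V = "A a \<union> (topspace X - S)"
    have "?U \<union> ?V = topspace X"
      using insert.prems(2,3) openin_subset by fastforce
    moreover have "openin X ?U" "openin X ?V"
    proof -
      have "openin X (topspace X - S)"
        using insert.prems(1) by (simp add: openin_diff)
      moreover have "openin X (\<Union>i\<in>I. A i)" "openin X (A a)"
        using insert.prems(2) by (auto intro: openin_Union)
      ultimately show "openin X ?U" "openin X ?V"
        by (simp_all add: openin_Un)
    qed
    ultimately obtain S' T' where S'T': "closedin X S'" "closedin X T'" "S' \<subseteq> ?U" "T' \<subseteq> ?V"
      "S' \<union> T' = topspace X"
      using normal_space_dual[THEN iffD1, OF \<open>normal_space X\<close>, rule_format, of ?U ?V] by meson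
    have "closedin X (S \<inter> S')"
      using insert.prems(1) S'T'(1) by (rule closedin_Int)
    moreover have "S \<inter> S' \<subseteq> (\<Union>i\<in>I. A i)"
      using S'T'(3) by blast
    ultimately obtain C where C: "\<forall>i\<in>I. closedin X (C i) \<and> C i \<subseteq> A i" "S \<inter> S' \<subseteq> (\<Union>i\<in>I. C i)"
      using insert.IH[of "S \<inter> S'"] insert.prems(2) by auto
    show ?case
    proof (intro exI conjI ballI)
      fix i assume "i \<in> insert a I"
      then show "closedin X ((C(a := S \<inter> T')) i)" "(C(a := S \<inter> T')) i \<subseteq> A i"
        using C(1) S'T'(2,4) insert.prems(1) by auto
    next
      have "S \<subseteq> (S \<inter> S') \<union> (S \<inter> T')"
        using S'T'(5) closedin_subset[OF insert.prems(1)] by blast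
      then show "S \<subseteq> (\<Union>i\<in>insert a I. (C(a := S \<inter> T')) i)"
        using C(2) insert.hyps(2) by auto
    qed
  qed
  then show ?thesis using that by blast
qed

lemma normal_space_open_cover_functions:
  assumes "normal_space X" "finite I"
    and "\<And>i. i \<in> I \<Longrightarrow> openin X (A i)" "topspace X \<subseteq> (\<Union>i\<in>I. A i)"
  obtains \<phi> :: "'i \<Rightarrow> 'a \<Rightarrow> real"
  where "\<And>i. i \<in> I \<Longrightarrow> continuous_map X euclideanreal (\<phi> i)"
    and "\<And>i x. i \<in> I \<Longrightarrow> x \<in> topspace X \<Longrightarrow> 0 \<le> \<phi> i x"
    and "\<And>i x. i \<in> I \<Longrightarrow> x \<in> topspace X \<Longrightarrow> 0 < \<phi> i x \<Longrightarrow> x \<in> A i"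
    and "\<And>x. x \<in> topspace X \<Longrightarrow> \<exists>i\<in>I. 0 < \<phi> i x"
proof -
  obtain C where C: "\<And>i. i \<in> I \<Longrightarrow> closedin X (C i)" "\<And>i. i \<in> I \<Longrightarrow> C i \<subseteq> A i"
    "topspace X \<subseteq> (\<Union>i\<in>I. C i)"
    using normal_space_closed_shrinking[OF assms(1,2) closedin_topspace assms(3,4)] by metis
  have "\<forall>i\<in>I. \<exists>u. continuous_map X (top_of_set {0..1::real}) u \<and>
      u ` (topspace X - A i) \<subseteq> {0} \<and> u ` C i \<subseteq> {1}"
  proof
    fix i assume "i \<in> I"
    have "closedin X (topspace X - A i)"
      using assms(3)[OF \<open>i \<in> I\<close>] by (simp add: closedin_diff)
    moreover have "disjnt (topspace X - A i) (C i)"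
      using C(2)[OF \<open>i \<in> I\<close>] unfolding disjnt_iff by blast
    ultimately show "\<exists>u. continuous_map X (top_of_set {0..1::real}) u \<and>
        u ` (topspace X - A i) \<subseteq> {0} \<and> u ` C i \<subseteq> {1}"
      using Urysohn_lemma[OF assms(1) _ C(1)[OF \<open>i \<in> I\<close>], of "topspace X - A i" 0 1] by (metis zero_le_one)
  qed
  from bchoice[OF this] obtain \<phi> where \<phi>: "\<forall>i\<in>I. continuous_map X (top_of_set {0..1::real}) (\<phi> i) \<and>
      \<phi> i ` (topspace X - A i) \<subseteq> {0} \<and> \<phi> i ` C i \<subseteq> {1}"
    by blast
  show thesis
  proof
    fix i assume "i \<in> I"
    then have cont: "continuous_map X (top_of_set {0..1::real}) (\<phi> i)"
      and off: "\<phi> i ` (topspace X - A i) \<subseteq> {0}"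
      using \<phi> by blast+
    then show "continuous_map X euclideanreal (\<phi> i)"
      using continuous_map_in_subtopology by blast
    fix x assume "x \<in> topspace X"
    with continuous_map_image_subset_topspace[OF cont] show "0 \<le> \<phi> i x"
      by auto
    show "x \<in> A i" if "0 < \<phi> i x"
    proof (rule ccontr)
      assume "x \<notin> A i"
      with off \<open>x \<in> topspace X\<close> have "\<phi> i x = 0"
        by blast
      with that show False by simp
    qed
  next
    fix x assume "x \<in> topspace X"
    then obtain i where "i \<in> I" "x \<in> C i"
      using C(3) by blast
    with \<phi> have "\<phi> i x = 1"
      by blast
    with \<open>i \<in> I\<close> show "\<exists>i\<in>I. 0 < \<phi> i x"
      by (intro bexI[of _ i]) simp_all
  qed
qed

definition dominant_set :: "'a topology \<Rightarrow> 'q set \<Rightarrow> ('q \<Rightarrow> 'a \<Rightarrow> real) \<Rightarrow> 'q set \<Rightarrow> 'a set"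
  where "dominant_set X Q u R =
    {x \<in> topspace X. \<forall>q\<in>R. 0 < u q x \<and> (\<forall>q'\<in>Q - R. u q' x < u q x)}"

lemma openin_dominant_set:
  assumes "finite Q" "R \<subseteq> Q" "\<And>q. q \<in> Q \<Longrightarrow> continuous_map X euclideanreal (u q)"
  shows "openin X (dominant_set X Q u R)"
proof -
  have "dominant_set X Q u R = (\<Inter>q\<in>R. {x \<in> topspace X. u q x \<in> {0<..}} \<inter>
      ((\<Inter>q'\<in>Q - R. {x \<in> topspace X. u q x - u q' x \<in> {0<..}}) \<inter> topspace X)) \<inter> topspace X"
    by (auto simp: dominant_set_def)
  also have "openin X \<dots>"
    using assms finite_subset
    by (intro openin_INT openin_Int openin_continuous_map_preimage[where Y=euclideanreal]
        continuous_map_diff) auto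
  finally show ?thesis .
qed

lemma dominant_set_chain:
  assumes "x \<in> dominant_set X Q u R" "x \<in> dominant_set X Q u R'" "R \<subseteq> Q" "R' \<subseteq> Q"
  shows "R \<subseteq> R' \<or> R' \<subseteq> R"
proof (rule ccontr)
  assume "\<not> (R \<subseteq> R' \<or> R' \<subseteq> R)"
  then obtain q q' where "q \<in> R - R'" "q' \<in> R' - R" by blast
  with assms have "u q' x < u q x" "u q x < u q' x"
    by (auto simp: dominant_set_def)
  then show False by simp
qed

lemma Times_eq_if_subset_card_add_eq:
  assumes "finite S'" "finite T'" "S \<noteq> {}" "T \<noteq> {}" "S \<times> T \<subseteq> S' \<times> T'"
    and "card S + card T = card S' + card T'"
  shows "S = S' \<and> T = T'"
proof -
  have sub: "S \<subseteq> S'" "T \<subseteq> T'"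
    using assms(3-5) by (simp_all add: times_subset_iff)
  have "card S \<le> card S'" "card T \<le> card T'"
    using card_mono[OF assms(1) sub(1)] card_mono[OF assms(2) sub(2)] .
  with assms(6) have "card S = card S'" "card T = card T'"
    by linarith+
  then show ?thesis
    using card_subset_eq[OF assms(1) sub(1)] card_subset_eq[OF assms(2) sub(2)] by blast
qed

lemma disjoint_dominant_sets_Times:
  assumes "finite Q"
  shows "pairwise disjnt {dominant_set X Q u (S \<times> T) | S T.
           S \<noteq> {} \<and> T \<noteq> {} \<and> S \<times> T \<subseteq> Q \<and> card S + card T = k}"
    (is "pairwise disjnt ?\<P>")
proof (rule pairwiseI)
  fix P P' assume "P \<in> ?\<P>" "P' \<in> ?\<P>" and "P \<noteq> P'"
  from \<open>P \<in> ?\<P>\<close> obtain S T where P: "P = dominant_set X Q u (S \<times> T)"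
    and ST: "S \<noteq> {}" "T \<noteq> {}" "S \<times> T \<subseteq> Q" "card S + card T = k"
    by blast
  from \<open>P' \<in> ?\<P>\<close> obtain S' T' where P': "P' = dominant_set X Q u (S' \<times> T')"
    and ST': "S' \<noteq> {}" "T' \<noteq> {}" "S' \<times> T' \<subseteq> Q" "card S' + card T' = k"
    by blast
  have fin_ST: "finite (S \<times> T)" and fin_ST': "finite (S' \<times> T')"
    using finite_subset[OF ST(3) assms] finite_subset[OF ST'(3) assms] .
  have "finite S" "finite T" "finite S'" "finite T'"
    using finite_cartesian_productD1[OF fin_ST ST(2)] finite_cartesian_productD2[OF fin_ST ST(1)]
      finite_cartesian_productD1[OF fin_ST' ST'(2)] finite_cartesian_productD2[OF fin_ST' ST'(1)] .
  show "disjnt P P'"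
    unfolding disjnt_iff
  proof (intro allI notI, elim conjE)
    fix x assume "x \<in> P" "x \<in> P'"
    then have "S \<times> T \<subseteq> S' \<times> T' \<or> S' \<times> T' \<subseteq> S \<times> T"
      using ST(3) ST'(3) unfolding P P' by (rule dominant_set_chain)
    then have "S = S' \<and> T = T'"
    proof
      assume "S \<times> T \<subseteq> S' \<times> T'"
      with \<open>finite S'\<close> \<open>finite T'\<close> ST ST' show ?thesis
        by (intro Times_eq_if_subset_card_add_eq) simp_all
    next
      assume "S' \<times> T' \<subseteq> S \<times> T"
      with \<open>finite S\<close> \<open>finite T\<close> ST ST' have "S' = S \<and> T' = T"
        by (intro Times_eq_if_subset_card_add_eq) simp_all
      then show ?thesis by simp
    qed
    with \<open>P \<noteq> P'\<close> show False
      unfolding P P' by simp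
  qed
qed

lemma argmax_sets_mult:
  fixes a :: "'i \<Rightarrow> real" and b :: "'j \<Rightarrow> real"
  assumes "finite I" "finite J" "\<And>i. i \<in> I \<Longrightarrow> 0 \<le> a i" "\<And>j. j \<in> J \<Longrightarrow> 0 \<le> b j"
    and "\<exists>i\<in>I. 0 < a i" "\<exists>j\<in>J. 0 < b j"
  obtains S T where "S \<subseteq> I" "T \<subseteq> J" "S \<noteq> {}" "T \<noteq> {}"
    and "\<And>q. q \<in> S \<times> T \<Longrightarrow> 0 < a (fst q) * b (snd q)"
    and "\<And>q q'. q \<in> S \<times> T \<Longrightarrow> q' \<in> I \<times> J - S \<times> T \<Longrightarrow>
      a (fst q') * b (snd q') < a (fst q) * b (snd q)"
proof -
  define M where "M = Max (a ` I)"
  define N where "N = Max (b ` J)"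
  define S where "S = {i \<in> I. a i = M}"
  define T where "T = {j \<in> J. b j = N}"
  have le_M: "a i \<le> M" if "i \<in> I" for i
    unfolding M_def using assms(1) that by (intro Max_ge) auto
  have le_N: "b j \<le> N" if "j \<in> J" for j
    unfolding N_def using assms(2) that by (intro Max_ge) auto
  have "a ` I \<noteq> {}" "b ` J \<noteq> {}"
    using assms(5,6) by auto
  then have "M \<in> a ` I" "N \<in> b ` J"
    unfolding M_def N_def using Max_in finite_imageI assms(1,2) by blast+
  then have "S \<noteq> {}" "T \<noteq> {}"
    unfolding S_def T_def by auto
  have "0 < M" "0 < N"
    using assms(5,6) le_M le_N by force+
  have max_ST: "a (fst q) * b (snd q) = M * N" if "q \<in> S \<times> T" for q
    using that unfolding S_def T_def by auto
  have "a (fst q') * b (snd q') < M * N" if "q' \<in> I \<times> J - S \<times> T" for q'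
  proof -
    from that have "fst q' \<in> I" "snd q' \<in> J" "a (fst q') < M \<or> b (snd q') < N"
      using le_M le_N unfolding S_def T_def by (auto simp: less_le)
    with le_M le_N assms(3,4) \<open>0 < M\<close> \<open>0 < N\<close> show ?thesis
      by (smt (verit) mult_left_mono mult_right_mono mult_strict_left_mono mult_strict_right_mono)
  qed
  moreover have "S \<subseteq> I" "T \<subseteq> J"
    unfolding S_def T_def by auto
  ultimately show thesis
    using that[of S T] max_ST \<open>S \<noteq> {}\<close> \<open>T \<noteq> {}\<close> \<open>0 < M\<close> \<open>0 < N\<close> by simp
qed

lemma mem_dominant_set_argmax_Times:
  fixes m n :: nat
  assumes "x \<in> topspace X"
    and "\<And>i. i \<le> m \<Longrightarrow> 0 \<le> \<phi> i x" "\<exists>i\<le>m. 0 < \<phi> i x"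
    and "\<And>j. j \<le> n \<Longrightarrow> 0 \<le> \<psi> j x" "\<exists>j\<le>n. 0 < \<psi> j x"
  obtains S T where "S \<subseteq> {..m}" "T \<subseteq> {..n}" "S \<noteq> {}" "T \<noteq> {}"
    and "x \<in> dominant_set X ({..m} \<times> {..n}) (\<lambda>q x. \<phi> (fst q) x * \<psi> (snd q) x) (S \<times> T)"
proof -
  have nonneg: "\<And>i. i \<in> {..m} \<Longrightarrow> 0 \<le> \<phi> i x" "\<And>j. j \<in> {..n} \<Longrightarrow> 0 \<le> \<psi> j x"
    using assms(2,4) by simp_all
  have pos: "\<exists>i\<in>{..m}. 0 < \<phi> i x" "\<exists>j\<in>{..n}. 0 < \<psi> j x"
    using assms(3,5) by (metis atMost_iff)+
  obtain S T where ST: "S \<subseteq> {..m}" "T \<subseteq> {..n}" "S \<noteq> {}" "T \<noteq> {}"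
    and pos_ST: "\<And>q. q \<in> S \<times> T \<Longrightarrow> 0 < \<phi> (fst q) x * \<psi> (snd q) x"
    and dom_ST: "\<And>q q'. q \<in> S \<times> T \<Longrightarrow> q' \<in> {..m} \<times> {..n} - S \<times> T \<Longrightarrow>
      \<phi> (fst q') x * \<psi> (snd q') x < \<phi> (fst q) x * \<psi> (snd q) x"
    using argmax_sets_mult[OF finite_atMost finite_atMost nonneg pos] by blast
  have "x \<in> dominant_set X ({..m} \<times> {..n}) (\<lambda>q x. \<phi> (fst q) x * \<psi> (snd q) x) (S \<times> T)"
    unfolding dominant_set_def
  proof (intro CollectI conjI ballI assms(1))
    fix q assume "q \<in> S \<times> T"
    then show "0 < \<phi> (fst q) x * \<psi> (snd q) x"
      by (rule pos_ST)
    fix q' assume "q' \<in> {..m} \<times> {..n} - S \<times> T"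
    with \<open>q \<in> S \<times> T\<close> show "\<phi> (fst q') x * \<psi> (snd q') x < \<phi> (fst q) x * \<psi> (snd q) x"
      by (rule dom_ST)
  qed
  then show thesis
    by (rule that[OF ST])
qed

lemma dominant_sets_Times_refinement:
  assumes \<phi>: "\<And>i. i \<le> m \<Longrightarrow> continuous_map X euclideanreal (\<phi> i)"
      "\<And>i x. i \<le> m \<Longrightarrow> x \<in> topspace X \<Longrightarrow> 0 \<le> \<phi> i x"
      "\<And>x. x \<in> topspace X \<Longrightarrow> \<exists>i\<le>m. 0 < \<phi> i x"
    and \<psi>: "\<And>j. j \<le> n \<Longrightarrow> continuous_map X euclideanreal (\<psi> j)"
      "\<And>j x. j \<le> n \<Longrightarrow> x \<in> topspace X \<Longrightarrow> 0 \<le> \<psi> j x"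
      "\<And>x. x \<in> topspace X \<Longrightarrow> \<exists>j\<le>n. 0 < \<psi> j x"
  obtains \<W> :: "nat \<Rightarrow> 'a set set"
  where "\<And>k P. P \<in> \<W> k \<Longrightarrow> openin X P"
    and "\<And>k. pairwise disjnt (\<W> k)"
    and "\<And>k P. P \<in> \<W> k \<Longrightarrow>
      \<exists>i\<le>m. \<exists>j\<le>n. \<forall>x\<in>P. x \<in> topspace X \<and> 0 < \<phi> i x \<and> 0 < \<psi> j x"
    and "topspace X \<subseteq> (\<Union>k\<le>m + n. \<Union>(\<W> k))"
proof -
  define Q where "Q = {..m} \<times> {..n}"
  define u where "u = (\<lambda>q x. \<phi> (fst q) x * \<psi> (snd q) x)"
  define \<W> where "\<W> k = {dominant_set X Q u (S \<times> T) | S T.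
    S \<noteq> {} \<and> T \<noteq> {} \<and> S \<times> T \<subseteq> Q \<and> card S + card T = k + 2}" for k
  show thesis
  proof
    fix k P assume "P \<in> \<W> k"
    then obtain S T where P: "P = dominant_set X Q u (S \<times> T)" and "S \<noteq> {}" "T \<noteq> {}" "S \<times> T \<subseteq> Q"
      unfolding \<W>_def by blast
    have "continuous_map X euclideanreal (u q)" if "q \<in> Q" for q
      using that \<phi>(1) \<psi>(1) unfolding u_def Q_def by (auto intro: continuous_map_real_mult)
    with \<open>S \<times> T \<subseteq> Q\<close> show "openin X P"
      unfolding P Q_def by (intro openin_dominant_set) auto
    obtain i j where "i \<in> S" "j \<in> T"
      using \<open>S \<noteq> {}\<close> \<open>T \<noteq> {}\<close> by blast
    with \<open>S \<times> T \<subseteq> Q\<close> have "i \<le> m" "j \<le> n"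
      unfolding Q_def by auto
    moreover have "x \<in> topspace X \<and> 0 < \<phi> i x \<and> 0 < \<psi> j x" if "x \<in> P" for x
    proof -
      from that \<open>i \<in> S\<close> \<open>j \<in> T\<close> have "x \<in> topspace X" "0 < \<phi> i x * \<psi> j x"
        unfolding P dominant_set_def u_def by auto
      moreover from this(1) have "0 \<le> \<phi> i x" "0 \<le> \<psi> j x"
        using \<phi>(2) \<psi>(2) \<open>i \<le> m\<close> \<open>j \<le> n\<close> by auto
      ultimately show ?thesis
        by (simp add: zero_less_mult_iff)
    qed
    ultimately show "\<exists>i\<le>m. \<exists>j\<le>n. \<forall>x\<in>P. x \<in> topspace X \<and> 0 < \<phi> i x \<and> 0 < \<psi> j x"
      by blast
  next
    show "pairwise disjnt (\<W> k)" for k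
      unfolding \<W>_def Q_def by (rule disjoint_dominant_sets_Times) simp
  next
    show "topspace X \<subseteq> (\<Union>k\<le>m + n. \<Union>(\<W> k))"
    proof
      fix x assume x: "x \<in> topspace X"
      obtain S T where ST: "S \<subseteq> {..m}" "T \<subseteq> {..n}" "S \<noteq> {}" "T \<noteq> {}"
        and "x \<in> dominant_set X Q u (S \<times> T)"
        using mem_dominant_set_argmax_Times[where \<phi>=\<phi> and \<psi>=\<psi>, OF x \<phi>(2)[OF _ x] \<phi>(3)[OF x] \<psi>(2)[OF _ x] \<psi>(3)[OF x]]
        unfolding Q_def u_def by blast
      have "finite S" "finite T"
        using finite_subset[OF ST(1) finite_atMost] finite_subset[OF ST(2) finite_atMost] .
      with ST have "1 \<le> card S" "card S \<le> m + 1" "1 \<le> card T" "card T \<le> n + 1"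
        using card_mono[OF finite_atMost ST(1)] card_mono[OF finite_atMost ST(2)]
        by (simp_all add: Suc_le_eq card_gt_0_iff)
      then obtain k where "card S + card T = k + 2" "k \<le> m + n"
        by (intro that[of "card S + card T - 2"]) linarith+
      moreover have "S \<times> T \<subseteq> Q"
        using ST(1,2) unfolding Q_def by blast
      ultimately have "dominant_set X Q u (S \<times> T) \<in> \<W> k"
        unfolding \<W>_def using ST(3,4) by blast
      with \<open>x \<in> dominant_set X Q u (S \<times> T)\<close> \<open>k \<le> m + n\<close> show "x \<in> (\<Union>k\<le>m + n. \<Union>(\<W> k))"
        by blast
    qed
  qed
qed

lemma normal_space_refine_two_open_covers:
  assumes "normal_space X"
    and A: "\<And>i. i \<le> m \<Longrightarrow> openin X (A i)" "topspace X \<subseteq> (\<Union>i\<le>m. A i)"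
    and B: "\<And>j. j \<le> n \<Longrightarrow> openin X (B j)" "topspace X \<subseteq> (\<Union>j\<le>n. B j)"
  obtains \<W> :: "nat \<Rightarrow> 'a set set"
  where "\<And>k P. P \<in> \<W> k \<Longrightarrow> openin X P"
    and "\<And>k. pairwise disjnt (\<W> k)"
    and "\<And>k P. P \<in> \<W> k \<Longrightarrow> \<exists>i\<le>m. \<exists>j\<le>n. P \<subseteq> A i \<inter> B j"
    and "topspace X \<subseteq> (\<Union>k\<le>m + n. \<Union>(\<W> k))"
proof -
  obtain \<phi> where \<phi>: "\<And>i. i \<le> m \<Longrightarrow> continuous_map X euclideanreal (\<phi> i)"
    "\<And>i x. i \<le> m \<Longrightarrow> x \<in> topspace X \<Longrightarrow> 0 \<le> \<phi> i x"
    "\<And>i x. i \<le> m \<Longrightarrow> x \<in> topspace X \<Longrightarrow> 0 < \<phi> i x \<Longrightarrow> x \<in> A i"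
    "\<And>x. x \<in> topspace X \<Longrightarrow> \<exists>i\<le>m. 0 < \<phi> i x"
    using normal_space_open_cover_functions[OF assms(1) finite_atMost, of m A] A by (metis atMost_iff)
  obtain \<psi> where \<psi>: "\<And>j. j \<le> n \<Longrightarrow> continuous_map X euclideanreal (\<psi> j)"
    "\<And>j x. j \<le> n \<Longrightarrow> x \<in> topspace X \<Longrightarrow> 0 \<le> \<psi> j x"
    "\<And>j x. j \<le> n \<Longrightarrow> x \<in> topspace X \<Longrightarrow> 0 < \<psi> j x \<Longrightarrow> x \<in> B j"
    "\<And>x. x \<in> topspace X \<Longrightarrow> \<exists>j\<le>n. 0 < \<psi> j x"
    using normal_space_open_cover_functions[OF assms(1) finite_atMost, of n B] B by (metis atMost_iff)
  obtain \<W> where \<W>: "\<And>k P. P \<in> \<W> k \<Longrightarrow> openin X P" "\<And>k. pairwise disjnt (\<W> k)"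
    "\<And>k P. P \<in> \<W> k \<Longrightarrow> \<exists>i\<le>m. \<exists>j\<le>n. \<forall>x\<in>P. x \<in> topspace X \<and> 0 < \<phi> i x \<and> 0 < \<psi> j x"
    "topspace X \<subseteq> (\<Union>k\<le>m + n. \<Union>(\<W> k))"
    using dominant_sets_Times_refinement[OF \<phi>(1,2,4) \<psi>(1,2,4)] by blast
  show thesis
  proof (rule that[OF \<W>(1,2) _ \<W>(4)])
    fix k P assume "P \<in> \<W> k"
    with \<W>(3) obtain i j where "i \<le> m" "j \<le> n"
      and "\<forall>x\<in>P. x \<in> topspace X \<and> 0 < \<phi> i x \<and> 0 < \<psi> j x"
      by blast
    with \<phi>(3) \<psi>(3) show "\<exists>i\<le>m. \<exists>j\<le>n. P \<subseteq> A i \<inter> B j"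
      by blast
  qed
qed

lemma hd_cover_trans:
  assumes "normal_space X" "hd_cover X Y f g m" "hd_cover X Y g h n"
  shows "hd_cover X Y f h (m + n)"
proof -
  obtain A where A: "\<And>i. i \<le> m \<Longrightarrow> openin X (A i)" "(\<Union>i\<le>m. A i) = topspace X"
    and fg: "\<And>i. i \<le> m \<Longrightarrow> homotopic_with (\<lambda>_. True) (subtopology X (A i)) Y f g"
    using assms(2) unfolding hd_cover_def by blast
  obtain B where B: "\<And>j. j \<le> n \<Longrightarrow> openin X (B j)" "(\<Union>j\<le>n. B j) = topspace X"
    and gh: "\<And>j. j \<le> n \<Longrightarrow> homotopic_with (\<lambda>_. True) (subtopology X (B j)) Y g h"
    using assms(3) unfolding hd_cover_def by blast
  obtain \<W> where \<W>: "\<And>k P. P \<in> \<W> k \<Longrightarrow> openin X P" "\<And>k. pairwise disjnt (\<W> k)"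
    "\<And>k P. P \<in> \<W> k \<Longrightarrow> \<exists>i\<le>m. \<exists>j\<le>n. P \<subseteq> A i \<inter> B j"
    "topspace X \<subseteq> (\<Union>k\<le>m + n. \<Union>(\<W> k))"
    using normal_space_refine_two_open_covers[OF assms(1) A(1) equalityD2[OF A(2)] B(1) equalityD2[OF B(2)]]
    by metis
  have fh: "homotopic_with (\<lambda>_. True) (subtopology X P) Y f h"
    if "i \<le> m" "j \<le> n" "P \<subseteq> A i \<inter> B j" for P i j
  proof (rule homotopic_with_trans)
    show "homotopic_with (\<lambda>_. True) (subtopology X P) Y f g"
      using homotopic_from_subtopology[OF fg[OF \<open>i \<le> m\<close>], of P] that(3)
      by (simp add: subtopology_subtopology Int_absorb1)
    show "homotopic_with (\<lambda>_. True) (subtopology X P) Y g h"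
      using homotopic_from_subtopology[OF gh[OF \<open>j \<le> n\<close>], of P] that(3)
      by (simp add: subtopology_subtopology Int_absorb1)
  qed
  show ?thesis
    unfolding hd_cover_def
  proof (intro exI[of _ "\<lambda>k. \<Union>(\<W> k)"] conjI allI impI)
    fix k assume "k \<le> m + n"
    show "openin X (\<Union>(\<W> k))"
      using \<W>(1) by (intro openin_Union)
    show "homotopic_with (\<lambda>_. True) (subtopology X (\<Union>(\<W> k))) Y f h"
    proof (rule homotopic_with_Union_disjoint_openin[OF \<W>(1,2)])
      fix P assume "P \<in> \<W> k"
      with \<W>(3) obtain i j where "i \<le> m" "j \<le> n" "P \<subseteq> A i \<inter> B j"
        by blast
      then show "homotopic_with (\<lambda>_. True) (subtopology X P) Y f h"
        by (rule fh)
    qed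
  next
    have "\<Union>(\<W> k) \<subseteq> topspace X" for k
      using \<W>(1) openin_subset by blast
    with \<W>(4) show "(\<Union>k\<le>m + n. \<Union>(\<W> k)) = topspace X"
      by (intro equalityI) auto
  qed
qed

lemma homotopic_distance_le_if_hd_cover:
  assumes "hd_cover X Y f g n"
  shows "homotopic_distance X Y f g \<le> enat n"
proof -
  from assms have "homotopic_distance X Y f g = enat (LEAST k. hd_cover X Y f g k)"
    unfolding homotopic_distance_def by auto
  also have "\<dots> \<le> enat n"
    using Least_le[of "hd_cover X Y f g", OF assms] by simp
  finally show ?thesis .
qed

lemma hd_cover_if_homotopic_distance_eq:
  assumes "homotopic_distance X Y f g = enat n"
  shows "hd_cover X Y f g n"
proof -
  have ex: "\<exists>k. hd_cover X Y f g k"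
  proof (rule ccontr)
    assume "\<nexists>k. hd_cover X Y f g k"
    with assms show False
      by (simp add: homotopic_distance_def)
  qed
  with assms have "n = (LEAST k. hd_cover X Y f g k)"
    unfolding homotopic_distance_def by simp
  with LeastI_ex[OF ex] show ?thesis by simp
qed

theorem proposition3p17:
  fixes X :: "'a topology" and Y :: "'b topology" and f g h :: "'a \<Rightarrow> 'b"
  assumes "normal_space X"
    and "continuous_map X Y f" and "continuous_map X Y g" and "continuous_map X Y h"
  shows "homotopic_distance X Y f h \<le> homotopic_distance X Y f g + homotopic_distance X Y g h"
proof (cases "homotopic_distance X Y f g = \<infinity> \<or> homotopic_distance X Y g h = \<infinity>")
  case True
  then show ?thesis by auto
next
  case False
  then obtain m n where m: "homotopic_distance X Y f g = enat m"
    and n: "homotopic_distance X Y g h = enat n"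
    by (metis not_infinity_eq)
  have "hd_cover X Y f h (m + n)"
    using hd_cover_trans[OF assms(1) hd_cover_if_homotopic_distance_eq[OF m]
        hd_cover_if_homotopic_distance_eq[OF n]] .
  then have "homotopic_distance X Y f h \<le> enat (m + n)"
    by (rule homotopic_distance_le_if_hd_cover)
  with m n show ?thesis by simp
qed

end
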